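(* Let $T=(T,\eta,\mu)$ be a monad on a category $\mathcal{A}$ and $X$ an object of $\mathcal{A}$. (i) If $a\colon T(X)\to X$ is a $T$-algebra and $b\colon X\to T(X)$ is a $\overline{T}$-coalgebra (basis) on $a$, then $b$ is an equaliser in $\mathcal{A}$ of the pair $T(b),T(\eta_X)\colon T(X)\rightrightarrows T^2(X)$. (ii) Conversely, if $c\colon X\to T(X)$ is a map that is an equaliser of $T(c),T(\eta_X)\colon T(X)\rightrightarrows T^2(X)$, then there is a unique map $a\colon T(X)\to X$ with $c\circ a=\mu_X\circ T(c)$, this $a$ is a $T$-algebra, and $c$ is a $\overline{T}$-coalgebra on $a$. Thus pairs (algebra $a$, basis $b$ on $a$) on $X$ correspond bijectively to maps $c\colon X\to T(X)$ that equalise $T(c)$ and $T(\eta_X)$ universally, via $(a,b)\mapsto b$.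
   Context: For a monad $T=(T,\eta,\mu)$ on $\mathcal{A}$, an Eilenberg–Moore algebra is $a\colon T(X)\to X$ with $a\circ\eta_X=\mathrm{id}$ and $a\circ\mu_X=a\circ T(a)$. The induced comonad $\overline{T}$ on the category of algebras sends $a$ to the free algebra $\mu_X\colon T^2X\to TX$, with counit $a$ and comultiplication $T(\eta_X)$. A $\overline{T}$-coalgebra (basis) on the algebra $a\colon TX\to X$ is a map $b\colon X\to TX$ in $\mathcal{A}$ satisfying $b\circ a=\mu_X\circ T(b)$, $a\circ b=\mathrm{id}_X$ and $T(\eta_X)\circ b=T(b)\circ b$. *)

theory Defs
  imports Main
begin

text \<open>A (locally small) category, given by its objects, hom-sets, composition
  (written in the order g \<cdot> f = "g after f") and identities.
  Hom-sets of distinct pairs of objects are disjoint.\<close>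

record ('o, 'm) category =
  Obj :: "'o set"
  Hom :: "'o \<Rightarrow> 'o \<Rightarrow> 'm set"
  cmp :: "'m \<Rightarrow> 'm \<Rightarrow> 'm"
  idm :: "'o \<Rightarrow> 'm"

definition is_category :: "('o, 'm) category \<Rightarrow> bool" where
  "is_category C \<longleftrightarrow>
     (\<forall>A B A' B'. A \<in> Obj C \<and> B \<in> Obj C \<and> A' \<in> Obj C \<and> B' \<in> Obj C \<and>
        Hom C A B \<inter> Hom C A' B' \<noteq> {} \<longrightarrow> A = A' \<and> B = B') \<and>
     (\<forall>A B. (A \<notin> Obj C \<or> B \<notin> Obj C) \<longrightarrow> Hom C A B = {}) \<and>
     (\<forall>A B D f g. A \<in> Obj C \<and> B \<in> Obj C \<and> D \<in> Obj C \<and> f \<in> Hom C A B \<and> g \<in> Hom C B D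
        \<longrightarrow> cmp C g f \<in> Hom C A D) \<and>
     (\<forall>A B D E f g h. A \<in> Obj C \<and> B \<in> Obj C \<and> D \<in> Obj C \<and> E \<in> Obj C \<and>
        f \<in> Hom C A B \<and> g \<in> Hom C B D \<and> h \<in> Hom C D E
        \<longrightarrow> cmp C h (cmp C g f) = cmp C (cmp C h g) f) \<and>
     (\<forall>A. A \<in> Obj C \<longrightarrow> idm C A \<in> Hom C A A) \<and>
     (\<forall>A B f. A \<in> Obj C \<and> B \<in> Obj C \<and> f \<in> Hom C A B
        \<longrightarrow> cmp C (idm C B) f = f \<and> cmp C f (idm C A) = f)"

text \<open>A monad (T, \<eta>, \<mu>) on C: an endofunctor given by its object part TO and
  morphism part TM, with unit \<eta> and multiplication \<mu> given by their components.\<close>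

definition is_monad ::
  "('o, 'm) category \<Rightarrow> ('o \<Rightarrow> 'o) \<Rightarrow> ('m \<Rightarrow> 'm) \<Rightarrow> ('o \<Rightarrow> 'm) \<Rightarrow> ('o \<Rightarrow> 'm) \<Rightarrow> bool" where
  "is_monad C TO TM eta mu \<longleftrightarrow>
     \<comment> \<open>functor\<close>
     (\<forall>A. A \<in> Obj C \<longrightarrow> TO A \<in> Obj C) \<and>
     (\<forall>A B f. A \<in> Obj C \<and> B \<in> Obj C \<and> f \<in> Hom C A B \<longrightarrow> TM f \<in> Hom C (TO A) (TO B)) \<and>
     (\<forall>A. A \<in> Obj C \<longrightarrow> TM (idm C A) = idm C (TO A)) \<and>
     (\<forall>A B D f g. A \<in> Obj C \<and> B \<in> Obj C \<and> D \<in> Obj C \<and> f \<in> Hom C A B \<and> g \<in> Hom C B D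
        \<longrightarrow> TM (cmp C g f) = cmp C (TM g) (TM f)) \<and>
     \<comment> \<open>unit and multiplication are natural transformations\<close>
     (\<forall>A. A \<in> Obj C \<longrightarrow> eta A \<in> Hom C A (TO A)) \<and>
     (\<forall>A. A \<in> Obj C \<longrightarrow> mu A \<in> Hom C (TO (TO A)) (TO A)) \<and>
     (\<forall>A B f. A \<in> Obj C \<and> B \<in> Obj C \<and> f \<in> Hom C A B
        \<longrightarrow> cmp C (eta B) f = cmp C (TM f) (eta A)) \<and>
     (\<forall>A B f. A \<in> Obj C \<and> B \<in> Obj C \<and> f \<in> Hom C A B
        \<longrightarrow> cmp C (mu B) (TM (TM f)) = cmp C (TM f) (mu A)) \<and>
     \<comment> \<open>monad laws\<close>
     (\<forall>A. A \<in> Obj C \<longrightarrow> cmp C (mu A) (eta (TO A)) = idm C (TO A)) \<and>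
     (\<forall>A. A \<in> Obj C \<longrightarrow> cmp C (mu A) (TM (eta A)) = idm C (TO A)) \<and>
     (\<forall>A. A \<in> Obj C \<longrightarrow> cmp C (mu A) (TM (mu A)) = cmp C (mu A) (mu (TO A)))"

definition is_EM_algebra ::
  "('o, 'm) category \<Rightarrow> ('o \<Rightarrow> 'o) \<Rightarrow> ('m \<Rightarrow> 'm) \<Rightarrow> ('o \<Rightarrow> 'm) \<Rightarrow> ('o \<Rightarrow> 'm) \<Rightarrow> 'o \<Rightarrow> 'm \<Rightarrow> bool" where
  "is_EM_algebra C TO TM eta mu X a \<longleftrightarrow>
     a \<in> Hom C (TO X) X \<and>
     cmp C a (eta X) = idm C X \<and>
     cmp C a (mu X) = cmp C a (TM a)"

text \<open>A coalgebra (basis) b : X \<rightarrow> T X for the induced comonad on the algebra a.\<close>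

definition is_basis ::
  "('o, 'm) category \<Rightarrow> ('o \<Rightarrow> 'o) \<Rightarrow> ('m \<Rightarrow> 'm) \<Rightarrow> ('o \<Rightarrow> 'm) \<Rightarrow> ('o \<Rightarrow> 'm) \<Rightarrow> 'o \<Rightarrow> 'm \<Rightarrow> 'm \<Rightarrow> bool" where
  "is_basis C TO TM eta mu X a b \<longleftrightarrow>
     b \<in> Hom C X (TO X) \<and>
     cmp C b a = cmp C (mu X) (TM b) \<and>
     cmp C a b = idm C X \<and>
     cmp C (TM (eta X)) b = cmp C (TM b) b"

definition is_equaliser ::
  "('o, 'm) category \<Rightarrow> 'o \<Rightarrow> 'o \<Rightarrow> 'o \<Rightarrow> 'm \<Rightarrow> 'm \<Rightarrow> 'm \<Rightarrow> bool" where
  "is_equaliser C E X Y e f g \<longleftrightarrow>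
     e \<in> Hom C E X \<and> f \<in> Hom C X Y \<and> g \<in> Hom C X Y \<and>
     cmp C f e = cmp C g e \<and>
     (\<forall>Z h. Z \<in> Obj C \<and> h \<in> Hom C Z X \<and> cmp C f h = cmp C g h \<longrightarrow>
        (\<exists>!u. u \<in> Hom C Z E \<and> cmp C e u = h))"

end

theory Submission
  imports Defs
begin

text \<open>For a basis b on an algebra a, the maps a and \<mu> split the fork T(b), T(\<eta>),
  so b is a split equaliser. Conversely, if c is an equaliser of T(c) and T(\<eta>),
  naturality of \<mu> shows that \<mu> \<circ> T(c) equalises the same pair, so it factors as
  c \<circ> a; the algebra and basis equations for a and c then follow by cancelling
  the monomorphism c.\<close>

locale category =
  fixes C :: "('o, 'm) category"
  assumes is_category: "is_category C"
begin

abbreviation cmp_infix (infixl "\<cdot>" 55) where "g \<cdot> f \<equiv> cmp C g f"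

lemma hom_objs: "f \<in> Hom C A B \<Longrightarrow> A \<in> Obj C \<and> B \<in> Obj C"
  using is_category unfolding is_category_def by blast

lemma cmp_hom: "f \<in> Hom C A B \<Longrightarrow> g \<in> Hom C B D \<Longrightarrow> g \<cdot> f \<in> Hom C A D"
  using is_category hom_objs unfolding is_category_def by meson

lemma cmp_assoc:
  "f \<in> Hom C A B \<Longrightarrow> g \<in> Hom C B D \<Longrightarrow> h \<in> Hom C D E \<Longrightarrow> h \<cdot> (g \<cdot> f) = (h \<cdot> g) \<cdot> f"
  using is_category hom_objs unfolding is_category_def by meson

lemma id_hom: "A \<in> Obj C \<Longrightarrow> idm C A \<in> Hom C A A"
  using is_category unfolding is_category_def by blast

lemma id_left: "f \<in> Hom C A B \<Longrightarrow> idm C B \<cdot> f = f"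
  using is_category hom_objs unfolding is_category_def by meson

lemma id_right: "f \<in> Hom C A B \<Longrightarrow> f \<cdot> idm C A = f"
  using is_category hom_objs unfolding is_category_def by meson

lemma equaliser_equalises:
  assumes eq: "is_equaliser C E X Y e f g" and u: "u \<in> Hom C Z E"
  shows "f \<cdot> (e \<cdot> u) = g \<cdot> (e \<cdot> u)"
proof -
  have e: "e \<in> Hom C E X" and f: "f \<in> Hom C X Y" and g: "g \<in> Hom C X Y"
    and fork: "f \<cdot> e = g \<cdot> e"
    using eq unfolding is_equaliser_def by auto
  show ?thesis using cmp_assoc[OF u e f] cmp_assoc[OF u e g] fork by simp
qed

lemma equaliser_universal:
  assumes "is_equaliser C E X Y e f g" and h: "h \<in> Hom C Z X" and "f \<cdot> h = g \<cdot> h"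
  shows "\<exists>!u. u \<in> Hom C Z E \<and> e \<cdot> u = h"
  using assms hom_objs[OF h] unfolding is_equaliser_def by simp

lemma equaliser_mono:
  assumes eq: "is_equaliser C E X Y e f g"
    and u: "u \<in> Hom C Z E" and v: "v \<in> Hom C Z E" and euv: "e \<cdot> u = e \<cdot> v"
  shows "u = v"
proof -
  have "e \<in> Hom C E X" using eq unfolding is_equaliser_def by simp
  then have "\<exists>!w. w \<in> Hom C Z E \<and> e \<cdot> w = e \<cdot> u"
    using equaliser_universal[OF eq] cmp_hom[OF u] equaliser_equalises[OF eq u] by simp
  then show ?thesis using u v euv by (elim ex1E) metis
qed

lemma split_equaliser:
  assumes e: "e \<in> Hom C E X" and f: "f \<in> Hom C X Y" and g: "g \<in> Hom C X Y"
    and r: "r \<in> Hom C X E" and s: "s \<in> Hom C Y X"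
    and fork: "f \<cdot> e = g \<cdot> e" and re: "r \<cdot> e = idm C E"
    and er: "e \<cdot> r = s \<cdot> f" and sg: "s \<cdot> g = idm C X"
  shows "is_equaliser C E X Y e f g"
  unfolding is_equaliser_def
proof (intro conjI e f g fork allI impI ex1I; elim conjE)
  fix Z h assume h: "h \<in> Hom C Z X" and fh: "f \<cdot> h = g \<cdot> h"
  show "r \<cdot> h \<in> Hom C Z E" using cmp_hom[OF h r] .
  have "e \<cdot> (r \<cdot> h) = (s \<cdot> f) \<cdot> h" using cmp_assoc[OF h r e] er by simp
  also have "\<dots> = (s \<cdot> g) \<cdot> h" using cmp_assoc[OF h f s] cmp_assoc[OF h g s] fh by simp
  also have "\<dots> = h" using sg id_left[OF h] by simp
  finally show "e \<cdot> (r \<cdot> h) = h" .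
  fix u assume u: "u \<in> Hom C Z E" and eu: "e \<cdot> u = h"
  have "u = (r \<cdot> e) \<cdot> u" using re id_left[OF u] by simp
  also have "\<dots> = r \<cdot> h" using cmp_assoc[OF u e r] eu by simp
  finally show "u = r \<cdot> h" .
qed

end

locale monad = category +
  fixes TO TM eta mu
  assumes is_monad: "is_monad C TO TM eta mu"
begin

lemma T_obj: "A \<in> Obj C \<Longrightarrow> TO A \<in> Obj C"
  using is_monad unfolding is_monad_def by simp

lemma T_hom: "f \<in> Hom C A B \<Longrightarrow> TM f \<in> Hom C (TO A) (TO B)"
  using is_monad hom_objs unfolding is_monad_def by meson

lemma T_comp: "f \<in> Hom C A B \<Longrightarrow> g \<in> Hom C B D \<Longrightarrow> TM (g \<cdot> f) = TM g \<cdot> TM f"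
  using is_monad hom_objs unfolding is_monad_def by meson

lemma eta_hom: "A \<in> Obj C \<Longrightarrow> eta A \<in> Hom C A (TO A)"
  using is_monad unfolding is_monad_def by blast

lemma mu_hom: "A \<in> Obj C \<Longrightarrow> mu A \<in> Hom C (TO (TO A)) (TO A)"
  using is_monad unfolding is_monad_def by blast

lemma eta_natural: "f \<in> Hom C A B \<Longrightarrow> eta B \<cdot> f = TM f \<cdot> eta A"
  using is_monad hom_objs unfolding is_monad_def by meson

lemma mu_natural: "f \<in> Hom C A B \<Longrightarrow> mu B \<cdot> TM (TM f) = TM f \<cdot> mu A"
  using is_monad hom_objs unfolding is_monad_def by meson

lemma mu_eta: "A \<in> Obj C \<Longrightarrow> mu A \<cdot> eta (TO A) = idm C (TO A)"
  using is_monad unfolding is_monad_def by blast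

lemma mu_T_eta: "A \<in> Obj C \<Longrightarrow> mu A \<cdot> TM (eta A) = idm C (TO A)"
  using is_monad unfolding is_monad_def by blast

lemma mu_assoc: "A \<in> Obj C \<Longrightarrow> mu A \<cdot> TM (mu A) = mu A \<cdot> mu (TO A)"
  using is_monad unfolding is_monad_def by blast

abbreviation is_basis_equaliser where
  "is_basis_equaliser X c \<equiv> is_equaliser C X (TO X) (TO (TO X)) c (TM c) (TM (eta X))"

lemma basis_is_equaliser:
  assumes X: "X \<in> Obj C"
    and alg: "is_EM_algebra C TO TM eta mu X a" and bas: "is_basis C TO TM eta mu X a b"
  shows "is_basis_equaliser X b"
proof (rule split_equaliser)
  show "b \<in> Hom C X (TO X)" "a \<in> Hom C (TO X) X"
    using alg bas unfolding is_EM_algebra_def is_basis_def by simp_all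
  then show "TM b \<in> Hom C (TO X) (TO (TO X))" using T_hom by blast
  show "TM (eta X) \<in> Hom C (TO X) (TO (TO X))" using T_hom eta_hom X by blast
  show "mu X \<in> Hom C (TO (TO X)) (TO X)" using mu_hom X .
  show "mu X \<cdot> TM (eta X) = idm C (TO X)" using mu_T_eta X .
  show "TM b \<cdot> b = TM (eta X) \<cdot> b" "a \<cdot> b = idm C X" "b \<cdot> a = mu X \<cdot> TM b"
    using bas unfolding is_basis_def by simp_all
qed

lemma mu_T_equalises:
  assumes X: "X \<in> Obj C" and eq: "is_basis_equaliser X c"
  shows "TM c \<cdot> (mu X \<cdot> TM c) = TM (eta X) \<cdot> (mu X \<cdot> TM c)"
proof -
  have c: "c \<in> Hom C X (TO X)" and fork: "TM c \<cdot> c = TM (eta X) \<cdot> c"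
    using eq unfolding is_equaliser_def by simp_all
  have e: "eta X \<in> Hom C X (TO X)" using eta_hom X .
  have Tc: "TM c \<in> Hom C (TO X) (TO (TO X))" and Te: "TM (eta X) \<in> Hom C (TO X) (TO (TO X))"
    using T_hom c e by blast+
  have mu: "mu X \<in> Hom C (TO (TO X)) (TO X)"
    and muT: "mu (TO X) \<in> Hom C (TO (TO (TO X))) (TO (TO X))"
    using mu_hom X T_obj by blast+
  have "TM c \<cdot> (mu X \<cdot> TM c) = (mu (TO X) \<cdot> TM (TM c)) \<cdot> TM c"
    using cmp_assoc[OF Tc mu Tc] mu_natural[OF c] by simp
  also have "\<dots> = mu (TO X) \<cdot> TM (TM c \<cdot> c)"
    using cmp_assoc[OF Tc T_hom[OF Tc] muT] T_comp[OF c Tc] by simp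
  also have "\<dots> = mu (TO X) \<cdot> TM (TM (eta X) \<cdot> c)" using fork by simp
  also have "\<dots> = (mu (TO X) \<cdot> TM (TM (eta X))) \<cdot> TM c"
    using cmp_assoc[OF Tc T_hom[OF Te] muT] T_comp[OF c Te] by simp
  also have "\<dots> = TM (eta X) \<cdot> (mu X \<cdot> TM c)"
    using cmp_assoc[OF Tc mu Te] mu_natural[OF e] by simp
  finally show ?thesis .
qed

lemma equaliser_induces_algebra:
  assumes X: "X \<in> Obj C" and eq: "is_basis_equaliser X c"
  shows "\<exists>!a. a \<in> Hom C (TO X) X \<and> c \<cdot> a = mu X \<cdot> TM c"
proof (rule equaliser_universal[OF eq _ mu_T_equalises[OF X eq]])
  have "c \<in> Hom C X (TO X)" using eq unfolding is_equaliser_def by simp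
  then show "mu X \<cdot> TM c \<in> Hom C (TO X) (TO X)" using cmp_hom T_hom mu_hom X by blast
qed

lemma induced_algebra_basis:
  assumes X: "X \<in> Obj C" and eq: "is_basis_equaliser X c"
    and a: "a \<in> Hom C (TO X) X" and ca: "c \<cdot> a = mu X \<cdot> TM c"
  shows "is_EM_algebra C TO TM eta mu X a \<and> is_basis C TO TM eta mu X a c"
proof -
  have c: "c \<in> Hom C X (TO X)" and fork: "TM c \<cdot> c = TM (eta X) \<cdot> c"
    using eq unfolding is_equaliser_def by simp_all
  have e: "eta X \<in> Hom C X (TO X)" and mu: "mu X \<in> Hom C (TO (TO X)) (TO X)"
    and muT: "mu (TO X) \<in> Hom C (TO (TO (TO X))) (TO (TO X))"
    using eta_hom mu_hom T_obj X by blast+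
  have Tc: "TM c \<in> Hom C (TO X) (TO (TO X))" and Ta: "TM a \<in> Hom C (TO (TO X)) (TO X)"
    and Te: "TM (eta X) \<in> Hom C (TO X) (TO (TO X))"
    using T_hom c a e by blast+
  have cancel: "u = v" if "u \<in> Hom C Z X" "v \<in> Hom C Z X" "c \<cdot> u = c \<cdot> v" for Z u v
    using equaliser_mono[OF eq that] .
  have "c \<cdot> (a \<cdot> eta X) = mu X \<cdot> (TM c \<cdot> eta X)"
    using cmp_assoc[OF e a c] cmp_assoc[OF e Tc mu] ca by simp
  also have "\<dots> = (mu X \<cdot> eta (TO X)) \<cdot> c"
    using eta_natural[OF c] cmp_assoc[OF c eta_hom mu] T_obj X by simp
  also have "\<dots> = c \<cdot> idm C X" using mu_eta X id_left[OF c] id_right[OF c] by simp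
  finally have unit: "a \<cdot> eta X = idm C X"
    using cancel[OF cmp_hom[OF e a] id_hom[OF X]] by simp
  have "c \<cdot> (a \<cdot> mu X) = mu X \<cdot> (TM c \<cdot> mu X)"
    using cmp_assoc[OF mu a c] cmp_assoc[OF mu Tc mu] ca by simp
  also have "\<dots> = (mu X \<cdot> TM (mu X)) \<cdot> TM (TM c)"
    using mu_natural[OF c] cmp_assoc[OF T_hom[OF Tc] muT mu] mu_assoc X by simp
  also have "\<dots> = mu X \<cdot> TM (c \<cdot> a)"
    using cmp_assoc[OF T_hom[OF Tc] T_hom[OF mu] mu] T_comp[OF Tc mu] ca by simp
  also have "\<dots> = c \<cdot> (a \<cdot> TM a)"
    using T_comp[OF a c] cmp_assoc[OF Ta Tc mu] cmp_assoc[OF Ta a c] ca by simp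
  finally have mult: "a \<cdot> mu X = a \<cdot> TM a"
    using cancel[OF cmp_hom[OF mu a] cmp_hom[OF Ta a]] by simp
  have "c \<cdot> (a \<cdot> c) = mu X \<cdot> (TM (eta X) \<cdot> c)"
    using cmp_assoc[OF c a c] cmp_assoc[OF c Tc mu] ca fork by simp
  also have "\<dots> = c \<cdot> idm C X"
    using cmp_assoc[OF c Te mu] mu_T_eta X id_left[OF c] id_right[OF c] by simp
  finally have retract: "a \<cdot> c = idm C X"
    using cancel[OF cmp_hom[OF c a] id_hom[OF X]] by simp
  show ?thesis unfolding is_EM_algebra_def is_basis_def
    using a unit mult c ca retract fork by simp
qed

lemma basis_determines_algebra:
  assumes a: "a \<in> Hom C (TO X) X" and a': "a' \<in> Hom C (TO X) X"
    and "is_basis C TO TM eta mu X a b" "is_basis C TO TM eta mu X a' b"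
  shows "a = a'"
proof -
  have b: "b \<in> Hom C X (TO X)" and ab: "a \<cdot> b = idm C X" and ba: "b \<cdot> a = b \<cdot> a'"
    using assms unfolding is_basis_def by auto
  have "a = (a \<cdot> b) \<cdot> a" using ab id_left[OF a] by simp
  also have "\<dots> = (a \<cdot> b) \<cdot> a'" using cmp_assoc[OF a b a] cmp_assoc[OF a' b a] ba by simp
  also have "\<dots> = a'" using ab id_left[OF a'] by simp
  finally show ?thesis .
qed

end

theorem lemma2p3:
  fixes C :: "('o, 'm) category"
    and TO :: "'o \<Rightarrow> 'o" and TM :: "'m \<Rightarrow> 'm"
    and eta mu :: "'o \<Rightarrow> 'm" and X :: 'o
  assumes "is_category C"
    and "is_monad C TO TM eta mu"
    and "X \<in> Obj C"
  shows
    "(\<forall>a b. is_EM_algebra C TO TM eta mu X a \<and> is_basis C TO TM eta mu X a b \<longrightarrow>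
        is_equaliser C X (TO X) (TO (TO X)) b (TM b) (TM (eta X)))
   \<and> (\<forall>c. is_equaliser C X (TO X) (TO (TO X)) c (TM c) (TM (eta X)) \<longrightarrow>
        (\<exists>!a. a \<in> Hom C (TO X) X \<and> cmp C c a = cmp C (mu X) (TM c)) \<and>
        (\<forall>a. a \<in> Hom C (TO X) X \<and> cmp C c a = cmp C (mu X) (TM c) \<longrightarrow>
           is_EM_algebra C TO TM eta mu X a \<and> is_basis C TO TM eta mu X a c))
   \<and> bij_betw snd
       {(a, b). is_EM_algebra C TO TM eta mu X a \<and> is_basis C TO TM eta mu X a b}
       {c. is_equaliser C X (TO X) (TO (TO X)) c (TM c) (TM (eta X))}"
proof -
  interpret monad C TO TM eta mu
    using assms(1,2) by unfold_locales
  let ?pairs = "{(a, b). is_EM_algebra C TO TM eta mu X a \<and> is_basis C TO TM eta mu X a b}"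
  have inj: "inj_on snd ?pairs"
    by (rule inj_onI) (auto simp: is_EM_algebra_def intro: basis_determines_algebra)
  have surj: "c \<in> snd ` ?pairs" if eq: "is_basis_equaliser X c" for c
  proof -
    obtain a where "a \<in> Hom C (TO X) X" "c \<cdot> a = mu X \<cdot> TM c"
      using equaliser_induces_algebra[OF assms(3) eq] by blast
    then have "(a, c) \<in> ?pairs" using induced_algebra_basis[OF assms(3) eq] by simp
    then show ?thesis by (rule rev_image_eqI) simp
  qed
  have image: "snd ` ?pairs = {c. is_basis_equaliser X c}"
    using surj basis_is_equaliser[OF assms(3)] by auto
  show ?thesis
    using basis_is_equaliser[OF assms(3)] equaliser_induces_algebra[OF assms(3)]
      induced_algebra_basis[OF assms(3)] inj image
    unfolding bij_betw_def by blast
qed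

end
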